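(* Let $G=(V,E,w)$ be a connected undirected graph with positive edge weights $w:E\to\mathbb{R}_{+}$, let $v\in V$, and let $E_v$ be a set of node pairs $\{u,v\}$ with $u\neq v$ and $\{u,v\}\notin E$ (candidate edges incident to $v$), each $e\in E_v$ having a given positive weight $w(e)$. For $S\subseteq E_v$ let $\mathcal{R}(S)$ denote the resistance distance of $v$ in the augmented graph $G(S)$. Then $\mathcal{R}$ is monotonically decreasing: for any subsets $S\subsetneq T\subseteq E_v$, $$\mathcal{R}(T)<\mathcal{R}(S).$$
   Context: For a connected weighted graph $H$ on node set $V$ with $|V|=n$, its Laplacian is $\mathbf{L}=\mathbf{D}-\mathbf{A}$, where $\mathbf{A}$ is the weighted adjacency matrix and $\mathbf{D}$ the diagonal matrix of weighted degrees; $\mathbf{L}^\dagger$ denotes its Moore–Penrose pseudoinverse. For nodes $a,b$ let $\mathbf{b}_{a,b}=\mathbf{e}_a-\mathbf{e}_b$ (standard basis vectors). The resistance distance between $a$ and $b$ is $\mathcal{R}_{ab}=\mathbf{b}_{a,b}^\top\mathbf{L}^\dagger\mathbf{b}_{a,b}$, and the resistance distance of node $v$ is $\mathcal{R}_v=\sum_{u\in V}\mathcal{R}_{uv}$. For $S\subseteq E_v$, $G(S)=(V,E\cup S,w')$ is the graph obtained by adding the edges of $S$ with their given weights (weights of edges in $E$ unchanged). *)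

theory Defs
  imports "HOL-Analysis.Analysis"
begin

text \<open>Nodes are the elements of a finite type 'n (so V = UNIV). An undirected edge is a
  two-element node set; a weight function w assigns weights to such sets.
  Matrices are real^'n^'n.\<close>

definition is_edge :: "'n set \<Rightarrow> bool" where
  "is_edge e \<longleftrightarrow> (\<exists>a b. a \<noteq> b \<and> e = {a, b})"

definition adj_mat :: "'n::finite set set \<Rightarrow> ('n set \<Rightarrow> real) \<Rightarrow> real^'n^'n" where
  "adj_mat F w = (\<chi> a b. if a \<noteq> b \<and> {a, b} \<in> F then w {a, b} else 0)"

definition laplacian :: "'n::finite set set \<Rightarrow> ('n set \<Rightarrow> real) \<Rightarrow> real^'n^'n" where
  "laplacian F w = (\<chi> a b. (if a = b then (\<Sum>c\<in>UNIV. adj_mat F w $ a $ c) else 0)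
                           - adj_mat F w $ a $ b)"

definition pinv :: "real^'n^'n \<Rightarrow> real^'n^'n" where
  "pinv A = (THE X. A ** X ** A = A \<and> X ** A ** X = X \<and>
                    transpose (A ** X) = A ** X \<and> transpose (X ** A) = X ** A)"

definition bvec :: "'n::finite \<Rightarrow> 'n \<Rightarrow> real^'n" where
  "bvec a b = axis a 1 - axis b 1"

definition resistance :: "'n::finite set set \<Rightarrow> ('n set \<Rightarrow> real) \<Rightarrow> 'n \<Rightarrow> 'n \<Rightarrow> real" where
  "resistance F w a b = bvec a b \<bullet> (pinv (laplacian F w) *v bvec a b)"

definition node_resistance :: "'n::finite set set \<Rightarrow> ('n set \<Rightarrow> real) \<Rightarrow> 'n \<Rightarrow> real" where
  "node_resistance F w v = (\<Sum>u\<in>UNIV. resistance F w u v)"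

definition connected_graph :: "'n set set \<Rightarrow> bool" where
  "connected_graph F \<longleftrightarrow> (\<forall>a b. (a, b) \<in> {(x, y). {x, y} \<in> F}\<^sup>*)"

end

theory Submission
  imports Defs
begin

(* The resistance R_F(a,b) = b \<bullet> y, with b = e_a - e_b and potential y = L_F\<^sup>+ b, also equals
   the energy y \<bullet> L_F y, because L_F y = b on a connected graph.  If z is the potential after
   adding a set D of new edges, expanding 0 \<le> (z - y) \<bullet> L_F (z - y) with L_(F \<union> D) = L_F + L_D
   gives R_(F \<union> D)(a,b) + z \<bullet> L_D z \<le> R_F(a,b) (Rayleigh monotonicity).  When {a,b} \<in> D the
   extra energy is at least w{a,b} R_(F \<union> D)(a,b)\<^sup>2 > 0, so the resistance between v and the
   other end of an added edge drops strictly, and summing over all nodes gives the theorem. *)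

lemma connected_graph_mono:
  assumes "connected_graph E" and "E \<subseteq> F"
  shows "connected_graph F"
proof -
  have "{(x, y). {x, y} \<in> E} \<subseteq> {(x, y). {x, y} \<in> F}" using assms(2) by auto
  then show ?thesis using assms(1) rtrancl_mono unfolding connected_graph_def by blast
qed

lemma adj_mat_commute: "adj_mat F w $ a $ b = adj_mat F w $ b $ a"
  by (simp add: adj_mat_def insert_commute)

lemma adj_mat_nonneg: "\<forall>e\<in>F. w e \<ge> 0 \<Longrightarrow> adj_mat F w $ a $ b \<ge> 0"
  by (auto simp: adj_mat_def)

lemma adj_mat_union: "D \<inter> F = {} \<Longrightarrow> adj_mat (F \<union> D) w = adj_mat F w + adj_mat D w"
  by (auto simp: adj_mat_def vec_eq_iff)

lemma laplacian_union: "D \<inter> F = {} \<Longrightarrow> laplacian (F \<union> D) w = laplacian F w + laplacian D w"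
  by (simp add: laplacian_def adj_mat_union vec_eq_iff sum.distrib)

lemma laplacian_mult_vec:
  "(laplacian F w *v x) $ a = (\<Sum>c\<in>UNIV. adj_mat F w $ a $ c * (x $ a - x $ c))"
proof -
  have "(laplacian F w *v x) $ a =
      (\<Sum>c\<in>UNIV. if a = c then (\<Sum>d\<in>UNIV. adj_mat F w $ a $ d) * x $ c else 0)
      - (\<Sum>c\<in>UNIV. adj_mat F w $ a $ c * x $ c)"
    unfolding matrix_vector_mult_def vec_lambda_beta sum_subtractf[symmetric]
    by (rule sum.cong) (auto simp: laplacian_def left_diff_distrib)
  then show ?thesis
    by (simp add: sum.delta sum_distrib_right right_diff_distrib sum_subtractf)
qed

lemma laplacian_mult_const:
  assumes "\<And>a b. x $ a = x $ b"
  shows "laplacian F w *v x = 0"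
proof -
  have "(laplacian F w *v x) $ a = 0" for a
    unfolding laplacian_mult_vec by (rule sum.neutral) (metis assms diff_self mult_zero_right)
  then show ?thesis by (simp add: vec_eq_iff)
qed

lemma inner_laplacian_mult:
  "x \<bullet> (laplacian F w *v y) =
    (\<Sum>a\<in>UNIV. \<Sum>c\<in>UNIV. adj_mat F w $ a $ c * (x $ a - x $ c) * (y $ a - y $ c)) / 2"
proof -
  let ?A = "adj_mat F w"
  have lhs: "x \<bullet> (laplacian F w *v y) = (\<Sum>a\<in>UNIV. \<Sum>c\<in>UNIV. ?A $ a $ c * x $ a * (y $ a - y $ c))"
    by (simp add: inner_vec_def laplacian_mult_vec sum_distrib_left mult_ac)
  also have "\<dots> = - (\<Sum>a\<in>UNIV. \<Sum>c\<in>UNIV. ?A $ a $ c * x $ c * (y $ a - y $ c))"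
    by (subst sum.swap) (simp add: sum_negf[symmetric] adj_mat_commute[of F w] algebra_simps)
  finally have "2 * (x \<bullet> (laplacian F w *v y)) =
      (\<Sum>a\<in>UNIV. \<Sum>c\<in>UNIV. ?A $ a $ c * x $ a * (y $ a - y $ c))
      - (\<Sum>a\<in>UNIV. \<Sum>c\<in>UNIV. ?A $ a $ c * x $ c * (y $ a - y $ c))"
    using lhs by linarith
  also have "\<dots> = (\<Sum>a\<in>UNIV. \<Sum>c\<in>UNIV. ?A $ a $ c * (x $ a - x $ c) * (y $ a - y $ c))"
    by (simp add: sum_subtractf[symmetric] algebra_simps)
  finally show ?thesis by simp
qed

lemma inner_laplacian_mult_commute: "x \<bullet> (laplacian F w *v y) = y \<bullet> (laplacian F w *v x)"
  unfolding inner_laplacian_mult by (intro arg_cong[where f="\<lambda>t. t / 2"] sum.cong refl) (simp add: mult_ac)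

lemma laplacian_quadratic_ge_edge:
  assumes nonneg: "\<forall>e\<in>F. w e \<ge> 0" and "{p, q} \<in> F" "p \<noteq> q"
  shows "w {p, q} * (x $ p - x $ q)\<^sup>2 \<le> x \<bullet> (laplacian F w *v x)"
proof -
  define f where "f = (\<lambda>(a, c). adj_mat F w $ a $ c * (x $ a - x $ c) * (x $ a - x $ c))"
  have f_nonneg: "f z \<ge> 0" for z
    by (auto simp: f_def adj_mat_nonneg[OF nonneg] mult.assoc split: prod.split)
  have "2 * (w {p, q} * (x $ p - x $ q)\<^sup>2) = (\<Sum>z\<in>{(p, q), (q, p)}. f z)"
    using assms(2,3) by (simp add: f_def adj_mat_def insert_commute power2_eq_square algebra_simps)
  also have "\<dots> \<le> (\<Sum>z\<in>UNIV \<times> UNIV. f z)"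
    by (rule sum_mono2) (auto simp: f_nonneg)
  also have "\<dots> = 2 * (x \<bullet> (laplacian F w *v x))"
    by (simp add: inner_laplacian_mult f_def sum.cartesian_product)
  finally show ?thesis by simp
qed

lemma laplacian_quadratic_nonneg: "\<forall>e\<in>F. w e \<ge> 0 \<Longrightarrow> x \<bullet> (laplacian F w *v x) \<ge> 0"
  unfolding inner_laplacian_mult
  by (intro divide_nonneg_pos sum_nonneg) (simp_all add: adj_mat_nonneg mult.assoc)

lemma laplacian_quadratic_eq_0_imp_const:
  assumes conn: "connected_graph F" and pos: "\<forall>e\<in>F. w e > 0"
    and zero: "x \<bullet> (laplacian F w *v x) = 0"
  shows "x $ a = x $ b"
proof -
  have edge: "x $ p = x $ q" if "{p, q} \<in> F" for p q
  proof (cases "p = q")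
    case False
    have "w {p, q} * (x $ p - x $ q)\<^sup>2 \<le> 0"
      using laplacian_quadratic_ge_edge[of F w p q x] pos that False zero by (auto simp: less_imp_le)
    moreover have "w {p, q} > 0" using pos that by blast
    ultimately show ?thesis by (simp add: mult_le_0_iff)
  qed simp
  have "(a, b) \<in> {(x, y). {x, y} \<in> F}\<^sup>*" using conn by (simp add: connected_graph_def)
  then show ?thesis
    by (induction rule: rtrancl_induct) (auto dest: edge)
qed

lemma matrix_diff_ldistrib: "(A::'a::ring_1^'n^'m) ** (B - C) = A ** B - A ** C"
  by (simp add: matrix_matrix_mult_def vec_eq_iff sum_subtractf[symmetric] algebra_simps)

lemma matrix_diff_rdistrib: "((A::'a::ring_1^'n^'m) - B) ** C = A ** C - B ** C"
  by (simp add: matrix_matrix_mult_def vec_eq_iff sum_subtractf[symmetric] algebra_simps)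

lemma matrix_add_rdistrib: "((A::'a::semiring_1^'n^'m) + B) ** C = A ** C + B ** C"
  by (simp add: matrix_matrix_mult_def vec_eq_iff sum.distrib[symmetric] algebra_simps)

lemma transpose_diff: "transpose (A - B) = transpose A - transpose (B::'a::ab_group_add^'n^'m)"
  by (simp add: transpose_def vec_eq_iff)

lemma penrose_unique:
  fixes A :: "real^'n^'m" and X Y :: "real^'m^'n"
  assumes X1: "A ** X ** A = A" and X2: "X ** A ** X = X"
    and X3: "transpose (A ** X) = A ** X" and X4: "transpose (X ** A) = X ** A"
    and Y1: "A ** Y ** A = A" and Y2: "Y ** A ** Y = Y"
    and Y3: "transpose (A ** Y) = A ** Y" and Y4: "transpose (Y ** A) = Y ** A"
  shows "X = Y"
proof -
  have "A ** X = transpose ((A ** Y) ** (A ** X))"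
    by (simp add: matrix_mul_assoc Y1 X3)
  also have "\<dots> = (A ** X) ** (A ** Y)"
    by (subst matrix_transpose_mul) (simp only: X3 Y3)
  also have "\<dots> = A ** Y"
    by (simp add: matrix_mul_assoc X1)
  finally have AX: "A ** X = A ** Y" .
  have "A ** (Y ** A) = A" and "A ** (X ** A) = A"
    using X1 Y1 by (simp_all add: matrix_mul_assoc)
  then have "X ** A = transpose ((X ** A) ** (Y ** A))"
    by (simp add: X4 flip: matrix_mul_assoc)
  also have "\<dots> = (Y ** A) ** (X ** A)"
    by (subst matrix_transpose_mul) (simp only: X4 Y4)
  also have "\<dots> = Y ** A"
    by (simp add: \<open>A ** (X ** A) = A\<close> flip: matrix_mul_assoc)
  finally have XA: "X ** A = Y ** A" .
  have "X = X ** (A ** X)" using X2 by (simp add: matrix_mul_assoc)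
  also have "\<dots> = (X ** A) ** Y" by (simp add: AX matrix_mul_assoc)
  also have "\<dots> = Y" by (simp add: XA Y2)
  finally show ?thesis .
qed

lemma pinv_eqI:
  fixes A X :: "real^'n^'n"
  assumes "A ** X ** A = A" "X ** A ** X = X"
    "transpose (A ** X) = A ** X" "transpose (X ** A) = X ** A"
  shows "pinv A = X"
  unfolding pinv_def
proof (rule the_equality)
  fix Y
  assume "A ** Y ** A = A \<and> Y ** A ** Y = Y \<and> transpose (A ** Y) = A ** Y \<and> transpose (Y ** A) = Y ** A"
  then show "Y = X" using penrose_unique[OF _ _ _ _ assms, of Y] by (elim conjE)
qed (use assms in auto)

definition averaging_mat :: "real^'n::finite^'n" where
  "averaging_mat = (\<chi> i j. 1 / real CARD('n))"

lemma averaging_mat_mult_vec: "(averaging_mat *v x) $ i = (\<Sum>j\<in>UNIV. x $ j) / real CARD('n)"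
  for x :: "real^'n::finite"
  by (simp add: matrix_vector_mult_def averaging_mat_def sum_divide_distrib)

lemma averaging_mat_mult_const:
  fixes x :: "real^'n::finite"
  assumes "\<And>a b. x $ a = x $ b"
  shows "averaging_mat *v x = x"
proof -
  have "(averaging_mat *v x) $ i = x $ i" for i
  proof -
    have "(\<Sum>j\<in>UNIV. x $ j) = (\<Sum>j\<in>(UNIV::'n set). x $ i)"
      by (intro sum.cong refl) (rule assms)
    then show ?thesis by (simp add: averaging_mat_mult_vec)
  qed
  then show ?thesis by (simp add: vec_eq_iff)
qed

lemma averaging_mat_mult_bvec: "averaging_mat *v bvec a b = 0"
  by (simp add: vec_eq_iff averaging_mat_mult_vec bvec_def axis_def sum_subtractf)

lemma transpose_averaging_mat: "transpose averaging_mat = averaging_mat"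
  by (simp add: transpose_def averaging_mat_def vec_eq_iff)

lemma averaging_mat_idem: "averaging_mat ** averaging_mat = averaging_mat"
  by (simp add: matrix_matrix_mult_def averaging_mat_def vec_eq_iff)

lemma laplacian_mult_averaging_mat: "laplacian F w ** averaging_mat = 0"
proof -
  have "(laplacian F w ** averaging_mat) $ i $ j = (laplacian F w *v (\<chi> k. 1 / real CARD('a))) $ i"
    for i j :: 'a
    by (simp add: matrix_matrix_mult_def matrix_vector_mult_def averaging_mat_def)
  then show ?thesis by (simp add: vec_eq_iff laplacian_mult_const)
qed

lemma transpose_laplacian: "transpose (laplacian F w) = laplacian F w"
  by (auto simp: transpose_def vec_eq_iff laplacian_def adj_mat_commute[of F w])

lemma averaging_mat_mult_laplacian: "averaging_mat ** laplacian F w = 0"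
proof -
  have "averaging_mat ** laplacian F w = transpose (laplacian F w ** averaging_mat)"
    by (simp add: matrix_transpose_mul transpose_laplacian transpose_averaging_mat)
  then show ?thesis by (simp add: laplacian_mult_averaging_mat transpose_def vec_eq_iff)
qed

lemma laplacian_plus_averaging_mat_injective:
  fixes F :: "'n::finite set set"
  assumes conn: "connected_graph F" and pos: "\<forall>e\<in>F. w e > 0"
    and zero: "(laplacian F w + averaging_mat) *v x = 0"
  shows "x = 0"
proof -
  let ?L = "laplacian F w" and ?J = "averaging_mat :: real^'n^'n"
  have "?J ** (?L + ?J) = ?J"
    by (simp add: matrix_add_ldistrib averaging_mat_mult_laplacian averaging_mat_idem)
  then have Jx: "?J *v x = 0"
    using zero by (metis matrix_vector_mul_assoc matrix_vector_mult_0_right)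
  then have "?L *v x = 0"
    using zero by (simp add: matrix_vector_mult_add_rdistrib)
  then have "x $ a = x $ b" for a b
    by (intro laplacian_quadratic_eq_0_imp_const[OF conn pos]) simp
  then show ?thesis
    using averaging_mat_mult_const[of x] Jx by simp
qed

lemma laplacian_mult_pinv:
  fixes F :: "'n::finite set set"
  assumes conn: "connected_graph F" and pos: "\<forall>e\<in>F. w e > 0"
  shows "laplacian F w ** pinv (laplacian F w) = mat 1 - averaging_mat"
proof -
  let ?L = "laplacian F w" and ?J = "averaging_mat :: real^'n^'n"
  define M where "M = ?L + ?J"
  obtain B where BM: "B ** M = mat 1"
    using matrix_left_invertible_ker laplacian_plus_averaging_mat_injective[OF conn pos]
    unfolding M_def by blast
  then have MB: "M ** B = mat 1"
    using matrix_left_right_inverse by blast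
  have JM: "?J ** M = ?J" and MJ: "M ** ?J = ?J"
    by (simp_all add: M_def matrix_add_ldistrib matrix_add_rdistrib averaging_mat_mult_laplacian
        laplacian_mult_averaging_mat averaging_mat_idem)
  have JB: "?J ** B = ?J" by (metis JM MB matrix_mul_assoc matrix_mul_rid)
  have BJ: "B ** ?J = ?J" by (metis MJ BM matrix_mul_assoc matrix_mul_lid)
  have L: "?L = M - ?J" by (simp add: M_def)
  \<comment> \<open>J projects onto the constants, the kernel of L, and M = L + J agrees with L off it\<close>
  define X where "X = B - ?J"
  have LX: "?L ** X = mat 1 - ?J"
    by (simp add: X_def matrix_diff_ldistrib laplacian_mult_averaging_mat)
      (simp add: L matrix_diff_rdistrib MB JB)
  have XL: "X ** ?L = mat 1 - ?J"
    by (simp add: X_def matrix_diff_rdistrib averaging_mat_mult_laplacian)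
      (simp add: L matrix_diff_ldistrib BM BJ)
  have "pinv ?L = X"
  proof (rule pinv_eqI)
    show "?L ** X ** ?L = ?L"
      by (simp add: LX matrix_diff_rdistrib averaging_mat_mult_laplacian)
    show "X ** ?L ** X = X"
      by (simp add: XL matrix_diff_rdistrib) (simp add: X_def matrix_diff_ldistrib JB averaging_mat_idem)
  qed (simp_all add: LX XL transpose_diff transpose_averaging_mat)
  then show ?thesis using LX by simp
qed

definition potential :: "'n::finite set set \<Rightarrow> ('n set \<Rightarrow> real) \<Rightarrow> 'n \<Rightarrow> 'n \<Rightarrow> real^'n" where
  "potential F w a b = pinv (laplacian F w) *v bvec a b"

lemma inner_bvec: "x \<bullet> bvec a b = x $ a - x $ b"
  by (simp add: bvec_def inner_diff_right inner_axis)

lemma resistance_eq_potential: "resistance F w a b = potential F w a b $ a - potential F w a b $ b"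
  by (simp add: resistance_def potential_def inner_commute[of "bvec a b"] inner_bvec)

lemma laplacian_mult_potential:
  assumes "connected_graph F" and "\<forall>e\<in>F. w e > 0"
  shows "laplacian F w *v potential F w a b = bvec a b"
  by (simp add: potential_def matrix_vector_mul_assoc laplacian_mult_pinv[OF assms]
      matrix_vector_mult_diff_rdistrib averaging_mat_mult_bvec)

lemma resistance_eq_energy:
  assumes "connected_graph F" and "\<forall>e\<in>F. w e > 0"
  shows "resistance F w a b = potential F w a b \<bullet> (laplacian F w *v potential F w a b)"
  by (simp add: laplacian_mult_potential[OF assms] inner_bvec resistance_eq_potential)

lemma resistance_pos:
  assumes conn: "connected_graph F" and pos: "\<forall>e\<in>F. w e > 0" and "a \<noteq> b"
  shows "resistance F w a b > 0"
proof -
  let ?y = "potential F w a b"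
  have "\<forall>e\<in>F. w e \<ge> 0" using pos by (auto simp: less_imp_le)
  then have "resistance F w a b \<ge> 0"
    by (simp add: resistance_eq_energy[OF conn pos] laplacian_quadratic_nonneg)
  moreover have "resistance F w a b \<noteq> 0"
  proof
    assume "resistance F w a b = 0"
    then have const: "?y $ p = ?y $ q" for p q
      by (intro laplacian_quadratic_eq_0_imp_const[OF conn pos]) (simp add: resistance_eq_energy[OF conn pos])
    have "bvec a b = 0"
      using laplacian_mult_potential[OF conn pos, of a b] laplacian_mult_const[OF const, of F w] by simp
    then show False
      using \<open>a \<noteq> b\<close> by (auto simp: bvec_def vec_eq_iff axis_def dest: spec[of _ a])
  qed
  ultimately show ?thesis by simp
qed

lemma resistance_union_plus_energy_le:
  assumes conn: "connected_graph F" and pos: "\<forall>e\<in>F \<union> D. w e > 0" and disj: "D \<inter> F = {}"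
  shows "resistance (F \<union> D) w a b
      + potential (F \<union> D) w a b \<bullet> (laplacian D w *v potential (F \<union> D) w a b)
    \<le> resistance F w a b"
proof -
  let ?L = "laplacian F w" and ?y = "potential F w a b" and ?z = "potential (F \<union> D) w a b"
  have posF: "\<forall>e\<in>F. w e > 0" and conn': "connected_graph (F \<union> D)"
    using pos connected_graph_mono[OF conn] by auto
  have Ly: "?L *v ?y = bvec a b"
    by (rule laplacian_mult_potential[OF conn posF])
  have "?z \<bullet> (?L *v ?z) + ?z \<bullet> (laplacian D w *v ?z) = resistance (F \<union> D) w a b"
    by (simp add: resistance_eq_energy[OF conn' pos] laplacian_union[OF disj]
        matrix_vector_mult_add_rdistrib inner_add_right)
  moreover have "?z \<bullet> (?L *v ?y) = resistance (F \<union> D) w a b"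
    by (simp add: Ly inner_bvec resistance_eq_potential)
  moreover have "?y \<bullet> (?L *v ?y) = resistance F w a b"
    by (simp add: Ly inner_bvec resistance_eq_potential)
  moreover have "0 \<le> (?z - ?y) \<bullet> (?L *v (?z - ?y))"
    using posF by (auto simp: less_imp_le intro: laplacian_quadratic_nonneg)
  ultimately show ?thesis
    by (simp add: matrix_vector_mult_diff_distrib inner_diff_left inner_diff_right
        inner_laplacian_mult_commute[of ?y F w ?z])
qed

lemma resistance_union_le:
  assumes "connected_graph F" and pos: "\<forall>e\<in>F \<union> D. w e > 0" and "D \<inter> F = {}"
  shows "resistance (F \<union> D) w a b \<le> resistance F w a b"
proof -
  have "\<forall>e\<in>D. w e \<ge> 0" using pos by (auto simp: less_imp_le)
  then have "0 \<le> potential (F \<union> D) w a b \<bullet> (laplacian D w *v potential (F \<union> D) w a b)"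
    by (rule laplacian_quadratic_nonneg)
  with resistance_union_plus_energy_le[OF assms, of a b] show ?thesis by linarith
qed

lemma resistance_union_less:
  assumes conn: "connected_graph F" and pos: "\<forall>e\<in>F \<union> D. w e > 0" and disj: "D \<inter> F = {}"
    and "{a, b} \<in> D" and "a \<noteq> b"
  shows "resistance (F \<union> D) w a b < resistance F w a b"
proof -
  let ?R = "resistance (F \<union> D) w a b" and ?z = "potential (F \<union> D) w a b"
  have "?R > 0"
    using resistance_pos[OF connected_graph_mono[OF conn] pos \<open>a \<noteq> b\<close>] by simp
  moreover have "w {a, b} > 0" using pos \<open>{a, b} \<in> D\<close> by blast
  ultimately have "0 < w {a, b} * ?R\<^sup>2" by simp
  also have "\<dots> \<le> ?z \<bullet> (laplacian D w *v ?z)"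
    unfolding resistance_eq_potential
    by (rule laplacian_quadratic_ge_edge) (use pos assms(4,5) in \<open>auto simp: less_imp_le\<close>)
  finally show ?thesis
    using resistance_union_plus_energy_le[OF conn pos disj, of a b] by linarith
qed

theorem theorem1:
  fixes E Ev :: "'n::finite set set" and w :: "'n set \<Rightarrow> real" and v :: 'n
  assumes edges: "\<forall>e\<in>E. is_edge e"
    and pos: "\<forall>e\<in>E. w e > 0"
    and conn: "connected_graph E"
    and cand: "\<forall>e\<in>Ev. \<exists>u. u \<noteq> v \<and> e = {u, v} \<and> e \<notin> E"
    and cand_pos: "\<forall>e\<in>Ev. w e > 0"
    and ST: "S \<subset> T" "T \<subseteq> Ev"
  shows "node_resistance (E \<union> T) w v < node_resistance (E \<union> S) w v"
proof -
  define D where "D = T - S"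
  have ET: "E \<union> T = (E \<union> S) \<union> D" using ST by (auto simp: D_def)
  have disj: "D \<inter> (E \<union> S) = {}" using ST cand by (auto simp: D_def)
  have posT: "\<forall>e\<in>(E \<union> S) \<union> D. w e > 0" using ST pos cand_pos ET by auto
  have connS: "connected_graph (E \<union> S)" using connected_graph_mono[OF conn] by blast
  obtain e where e: "e \<in> T" "e \<notin> S" using ST by blast
  then obtain u where "u \<noteq> v" "e = {u, v}" using ST cand by blast
  with e have u: "u \<noteq> v" "{u, v} \<in> D" by (auto simp: D_def)
  have "(\<Sum>a\<in>UNIV. resistance ((E \<union> S) \<union> D) w a v) < (\<Sum>a\<in>UNIV. resistance (E \<union> S) w a v)"
  proof (rule sum_strict_mono_ex1)
    show "\<forall>a\<in>UNIV. resistance ((E \<union> S) \<union> D) w a v \<le> resistance (E \<union> S) w a v"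
      using resistance_union_le[OF connS posT disj] by blast
    show "\<exists>a\<in>UNIV. resistance ((E \<union> S) \<union> D) w a v < resistance (E \<union> S) w a v"
      using resistance_union_less[OF connS posT disj u(2,1)] by blast
  qed simp
  then show ?thesis unfolding node_resistance_def ET .
qed

end
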